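(* For all $\Delta,\Delta',D,D'\in\mathcal D_n^+$, $$d_s(\Delta+D,\Delta'+D')\le\max\big(d_s(\Delta,\Delta'),d_s(D,D')\big).$$
   Context: $\mathcal D_n^+$ is the set of $n\times n$ diagonal matrices with positive diagonal entries, and $d_s(\Delta,\Delta')=\max_i\frac{|\Delta_i-\Delta'_i|}{\sqrt{\Delta_i\Delta'_i}}$. *)

theory Defs
  imports "HOL-Analysis.Analysis"
begin

text \<open>The set D_n^+ of n x n diagonal matrices with positive diagonal entries;
  the dimension n is the cardinality of the finite index type 'n.\<close>
definition pos_diag :: "(real^'n^'n) set" where
  "pos_diag = {A. (\<forall>i j. i \<noteq> j \<longrightarrow> A $ i $ j = 0) \<and> (\<forall>i. A $ i $ i > 0)}"

definition d_s :: "real^'n^'n \<Rightarrow> real^'n^'n \<Rightarrow> real" where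
  "d_s A B = Max (range (\<lambda>i. \<bar>A $ i $ i - B $ i $ i\<bar> / sqrt (A $ i $ i * B $ i $ i)))"

end

theory Submission
  imports Defs
begin

text \<open>Componentwise, |(a + b) - (a' + b')| \<le> t (sqrt (a a') + sqrt (b b')) by the triangle
  inequality, and sqrt (a a') + sqrt (b b') \<le> sqrt ((a + b)(a' + b')) by Cauchy-Schwarz for the
  vectors (sqrt a, sqrt b) and (sqrt a', sqrt b'). Taking t to be the larger of the two
  distances bounds every diagonal entry of the sum, hence its maximum.\<close>

definition rel_dist :: "real \<Rightarrow> real \<Rightarrow> real" where
  "rel_dist a b = \<bar>a - b\<bar> / sqrt (a * b)"

lemma d_s_rel_dist: "d_s A B = Max (range (\<lambda>i. rel_dist (A $ i $ i) (B $ i $ i)))"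
  by (simp add: d_s_def rel_dist_def)

lemma rel_dist_le_d_s: "rel_dist (A $ i $ i) (B $ i $ i) \<le> d_s A B"
  unfolding d_s_rel_dist by (rule Max_ge) auto

lemma d_s_le_iff: "d_s A B \<le> t \<longleftrightarrow> (\<forall>i. rel_dist (A $ i $ i) (B $ i $ i) \<le> t)"
  unfolding d_s_rel_dist by (subst Max_le_iff) auto

lemma rel_dist_le_iff:
  assumes "a > 0" "b > 0"
  shows "rel_dist a b \<le> t \<longleftrightarrow> \<bar>a - b\<bar> \<le> t * sqrt (a * b)"
  using assms by (simp add: rel_dist_def divide_le_eq)

lemma sqrt_mult_add_le:
  fixes x y u v :: real
  assumes "x \<ge> 0" "y \<ge> 0" "u \<ge> 0" "v \<ge> 0"
  shows "sqrt (x * y) + sqrt (u * v) \<le> sqrt ((x + u) * (y + v))"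
proof -
  define p q r s where "p = sqrt x" "q = sqrt y" "r = sqrt u" "s = sqrt v"
  have squares: "x = p\<^sup>2" "y = q\<^sup>2" "u = r\<^sup>2" "v = s\<^sup>2"
    and nonneg: "p \<ge> 0" "q \<ge> 0" "r \<ge> 0" "s \<ge> 0"
    using assms by (simp_all add: p_q_r_s_def)
  have "(p * q + r * s)\<^sup>2 \<le> (x + u) * (y + v)"
    using zero_le_power2[of "p * s - r * q"]
    by (simp add: squares power2_eq_square algebra_simps)
  then have "p * q + r * s \<le> sqrt ((x + u) * (y + v))"
    using nonneg by (simp add: real_le_rsqrt)
  then show ?thesis
    using nonneg by (simp add: squares real_sqrt_mult)
qed

lemma rel_dist_add_le_max:
  fixes a a' b b' :: real
  assumes "a > 0" "a' > 0" "b > 0" "b' > 0"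
  shows "rel_dist (a + b) (a' + b') \<le> max (rel_dist a a') (rel_dist b b')"
proof -
  define t where "t = max (rel_dist a a') (rel_dist b b')"
  have t_nonneg: "t \<ge> 0"
    using assms by (simp add: t_def rel_dist_def max.coboundedI1)
  have "\<bar>a - a'\<bar> \<le> t * sqrt (a * a')" "\<bar>b - b'\<bar> \<le> t * sqrt (b * b')"
    using assms by (simp_all add: t_def flip: rel_dist_le_iff)
  then have "\<bar>(a + b) - (a' + b')\<bar> \<le> t * (sqrt (a * a') + sqrt (b * b'))"
    by (simp add: algebra_simps)
  also have "\<dots> \<le> t * sqrt ((a + b) * (a' + b'))"
    using sqrt_mult_add_le[of a a' b b'] assms t_nonneg by (simp add: mult_left_mono)
  finally show ?thesis
    using assms by (simp add: t_def rel_dist_le_iff)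
qed

theorem mainTheorem5:
  fixes \<Delta> \<Delta>' D D' :: "real^'n^'n"
  assumes "\<Delta> \<in> pos_diag" and "\<Delta>' \<in> pos_diag" and "D \<in> pos_diag" and "D' \<in> pos_diag"
  shows "d_s (\<Delta> + D) (\<Delta>' + D') \<le> max (d_s \<Delta> \<Delta>') (d_s D D')"
  unfolding d_s_le_iff
proof
  fix i
  have "rel_dist (\<Delta> $ i $ i + D $ i $ i) (\<Delta>' $ i $ i + D' $ i $ i)
      \<le> max (rel_dist (\<Delta> $ i $ i) (\<Delta>' $ i $ i)) (rel_dist (D $ i $ i) (D' $ i $ i))"
    using assms by (intro rel_dist_add_le_max) (auto simp: pos_diag_def)
  also have "\<dots> \<le> max (d_s \<Delta> \<Delta>') (d_s D D')"
    by (intro max.mono rel_dist_le_d_s)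
  finally show "rel_dist ((\<Delta> + D) $ i $ i) ((\<Delta>' + D') $ i $ i) \<le> max (d_s \<Delta> \<Delta>') (d_s D D')"
    by simp
qed

end
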